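(* Let $n\ge 2$ be an integer and let $\boldsymbol{Z}$ be a finite E-subspace of the $n$-abomination $\mathbb{X}_n$ with an E-partition $R$ such that $\boldsymbol{Z}/R$ is $n$-colorable. Then for every $m\in\mathbb{N}$, if $c_{m,0},\dots,c_{m,2^{n+1}-1}\in Z$, there are $i<j$ such that $\langle c_{m,i},c_{m,j}\rangle\in R$.
   Context: $\mathbb{N}=\{0,1,2,\dots\}$. Fix an integer $n\ge 2$ and put $N=2^{n+1}-1$. Let $T_n$ be the set of triples $\langle k_1,k_2,k_3\rangle$ of pairwise distinct natural numbers $\le N$, with a fixed enumeration $T_n=\{s_0,\dots,s_t\}$. Let $U_n$ be a set of pairwise distinct elements $a_m,b_m$ ($m\in\mathbb{N}$) and $c_{m,k},d_{m,k},e^a_{m,k},e^b_{m,k}$ ($m\in\mathbb{N}$, $0\le k\le N$). Define $x\prec y$ on $U_n$ iff one of: (1) $x=a_m$ and $y\in\{c_{m,k_1},c_{m,k_2}\}$, where $s_j=\langle k_1,k_2,k_3\rangle$ with $j\equiv m \bmod (t+1)$; (2) $x=b_m$ and $y\in\{c_{m,k_1},c_{m,k_3}\}$, with $s_j$ as in (1); (3) $m\ge1$, $x=c_{m,k}$, and either $y=e^a_{m-1,j}$ with $j\ne k$, or $y=e^b_{m-1,i}$ for any $i\le N$; (4) $x=d_{m,k}$ and $y=c_{m,j}$ with $j\neq k$; (5) $x=e^a_{m,k}$ and either $y=a_m$ or $y=d_{m,j}$ with $j\ne k$; (6) $x=e^b_{m,k}$ and either $y=b_m$ or $y=d_{m,j}$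 with $j\ne k$. Let $\le$ be the reflexive transitive closure of $\prec$. The $n$-abomination $\mathbb{X}_n$ is the poset $U_n\cup\{\bot\}$ where $\bot$ is a new least element, with the topology in which $U$ is open iff $\bot\notin U$ or $U$ is cofinite; it is an Esakia space. An E-subspace is a closed upset with induced topology and order. An E-partition on an Esakia space $\mathbb{X}$ is an equivalence relation $R$ such that (a) if $\langle x,y\rangle\in R$ and $x\le z$ then there is $w\ge y$ with $\langle z,w\rangle\in R$; (b) if $\langle x,y\rangle\notin R$ there is a clopen union of $R$-classes containing $x$ but not $y$. The quotient $\mathbb{X}/R$ carries the quotient topology and the order $x/R\sqsubseteq y/R$ iff $x'\le y'$ for some $x'\in x/R$, $y'\in y/R$. With $\{0,1\}^n$ ordered componentwise, a weak $n$-coloring of an Esakia space is an order-preserving map into $\{0,1\}^n$ whose fibres are clopen; it is an $n$-coloring if every E-partition other than the identity relates two elements of distinct color; a space is $n$-colorable if it admits an $n$-coloring. *)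

theory Defs
  imports Main
begin

text \<open>A space is given by a carrier S, a family Op of open subsets, and an order le.\<close>

definition clopen_in :: "'a set \<Rightarrow> 'a set set \<Rightarrow> 'a set \<Rightarrow> bool" where
  "clopen_in S Op U \<longleftrightarrow> U \<subseteq> S \<and> U \<in> Op \<and> S - U \<in> Op"

definition E_partition :: "'a set \<Rightarrow> 'a set set \<Rightarrow> ('a \<Rightarrow> 'a \<Rightarrow> bool) \<Rightarrow> ('a \<times> 'a) set \<Rightarrow> bool" where
  "E_partition S Op le R \<longleftrightarrow>
     equiv S R \<and>
     (\<forall>x y z. (x, y) \<in> R \<and> z \<in> S \<and> le x z \<longrightarrow> (\<exists>w\<in>S. le y w \<and> (z, w) \<in> R)) \<and>
     (\<forall>x\<in>S. \<forall>y\<in>S. (x, y) \<notin> R \<longrightarrow>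
        (\<exists>U. clopen_in S Op U \<and> (\<forall>u\<in>U. \<forall>v. (u, v) \<in> R \<longrightarrow> v \<in> U) \<and> x \<in> U \<and> y \<notin> U))"

text \<open>Colors in {0,1}^n are represented by functions nat => bool, of which only
  the components i < n matter.\<close>

definition same_color :: "nat \<Rightarrow> (nat \<Rightarrow> bool) \<Rightarrow> (nat \<Rightarrow> bool) \<Rightarrow> bool" where
  "same_color n u v \<longleftrightarrow> (\<forall>i<n. u i = v i)"

definition weak_coloring :: "nat \<Rightarrow> 'a set \<Rightarrow> 'a set set \<Rightarrow> ('a \<Rightarrow> 'a \<Rightarrow> bool) \<Rightarrow> ('a \<Rightarrow> nat \<Rightarrow> bool) \<Rightarrow> bool" where
  "weak_coloring n S Op le f \<longleftrightarrow>
     (\<forall>x\<in>S. \<forall>y\<in>S. le x y \<longrightarrow> (\<forall>i<n. f x i \<longrightarrow> f y i)) \<and>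
     (\<forall>x\<in>S. clopen_in S Op {y\<in>S. same_color n (f y) (f x)})"

definition coloring :: "nat \<Rightarrow> 'a set \<Rightarrow> 'a set set \<Rightarrow> ('a \<Rightarrow> 'a \<Rightarrow> bool) \<Rightarrow> ('a \<Rightarrow> nat \<Rightarrow> bool) \<Rightarrow> bool" where
  "coloring n S Op le f \<longleftrightarrow>
     weak_coloring n S Op le f \<and>
     (\<forall>R. E_partition S Op le R \<and> R \<noteq> Id_on S \<longrightarrow>
        (\<exists>(x, y)\<in>R. \<not> same_color n (f x) (f y)))"

definition colorable :: "nat \<Rightarrow> 'a set \<Rightarrow> 'a set set \<Rightarrow> ('a \<Rightarrow> 'a \<Rightarrow> bool) \<Rightarrow> bool" where
  "colorable n S Op le \<longleftrightarrow> (\<exists>f. coloring n S Op le f)"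

definition E_subspace :: "'a set \<Rightarrow> 'a set set \<Rightarrow> ('a \<Rightarrow> 'a \<Rightarrow> bool) \<Rightarrow> 'a set \<Rightarrow> bool" where
  "E_subspace S Op le Z \<longleftrightarrow> Z \<subseteq> S \<and> S - Z \<in> Op \<and> (\<forall>x\<in>Z. \<forall>y\<in>S. le x y \<longrightarrow> y \<in> Z)"

definition sub_opens :: "'a set set \<Rightarrow> 'a set \<Rightarrow> 'a set set" where
  "sub_opens Op Z = {U \<inter> Z | U. U \<in> Op}"

definition quot_opens :: "'a set \<Rightarrow> 'a set set \<Rightarrow> ('a \<times> 'a) set \<Rightarrow> 'a set set set" where
  "quot_opens S Op R = {V. V \<subseteq> S // R \<and> \<Union>V \<in> Op}"

definition quot_le :: "('a \<Rightarrow> 'a \<Rightarrow> bool) \<Rightarrow> 'a set \<Rightarrow> 'a set \<Rightarrow> bool" where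
  "quot_le le P Q \<longleftrightarrow> (\<exists>x\<in>P. \<exists>y\<in>Q. le x y)"

datatype elt = Bot | A nat | B nat | C nat nat | D nat nat | Ea nat nat | Eb nat nat

definition NN :: "nat \<Rightarrow> nat" where
  "NN n = 2 ^ (n + 1) - 1"

definition triples :: "nat \<Rightarrow> (nat \<times> nat \<times> nat) set" where
  "triples n = {(k1, k2, k3). k1 \<le> NN n \<and> k2 \<le> NN n \<and> k3 \<le> NN n \<and>
                              k1 \<noteq> k2 \<and> k1 \<noteq> k3 \<and> k2 \<noteq> k3}"

definition enumeration :: "nat \<Rightarrow> (nat \<Rightarrow> nat \<times> nat \<times> nat) \<Rightarrow> bool" where
  "enumeration n s \<longleftrightarrow> bij_betw s {..<card (triples n)} (triples n)"

definition Un_set :: "nat \<Rightarrow> elt set" where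
  "Un_set n = range A \<union> range B \<union>
     (\<Union>m. \<Union>k\<in>{..NN n}. {C m k, D m k, Ea m k, Eb m k})"

definition abom_carrier :: "nat \<Rightarrow> elt set" where
  "abom_carrier n = insert Bot (Un_set n)"

definition sel :: "nat \<Rightarrow> (nat \<Rightarrow> nat \<times> nat \<times> nat) \<Rightarrow> nat \<Rightarrow> nat \<times> nat \<times> nat" where
  "sel n s m = s (m mod card (triples n))"

definition prec :: "nat \<Rightarrow> (nat \<Rightarrow> nat \<times> nat \<times> nat) \<Rightarrow> elt \<Rightarrow> elt \<Rightarrow> bool" where
  "prec n s x y \<longleftrightarrow> x \<in> Un_set n \<and> y \<in> Un_set n \<and>
    ((\<exists>m k1 k2 k3. sel n s m = (k1, k2, k3) \<and> x = A m \<and> (y = C m k1 \<or> y = C m k2)) \<or>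
     (\<exists>m k1 k2 k3. sel n s m = (k1, k2, k3) \<and> x = B m \<and> (y = C m k1 \<or> y = C m k3)) \<or>
     (\<exists>m k. m \<ge> 1 \<and> x = C m k \<and>
        ((\<exists>j. j \<noteq> k \<and> y = Ea (m - 1) j) \<or> (\<exists>i. y = Eb (m - 1) i))) \<or>
     (\<exists>m k j. x = D m k \<and> y = C m j \<and> j \<noteq> k) \<or>
     (\<exists>m k. x = Ea m k \<and> (y = A m \<or> (\<exists>j. j \<noteq> k \<and> y = D m j))) \<or>
     (\<exists>m k. x = Eb m k \<and> (y = B m \<or> (\<exists>j. j \<noteq> k \<and> y = D m j))))"

definition abom_le :: "nat \<Rightarrow> (nat \<Rightarrow> nat \<times> nat \<times> nat) \<Rightarrow> elt \<Rightarrow> elt \<Rightarrow> bool" where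
  "abom_le n s x y \<longleftrightarrow> x \<in> abom_carrier n \<and> y \<in> abom_carrier n \<and>
     (x = Bot \<or> (x, y) \<in> {(u, v). prec n s u v}\<^sup>*)"

definition abom_opens :: "nat \<Rightarrow> elt set set" where
  "abom_opens n = {U. U \<subseteq> abom_carrier n \<and> (Bot \<notin> U \<or> finite (abom_carrier n - U))}"

end

theory Submission
  imports Defs
begin

(* The points C m k (k \<le> NN n) are the top row of a ladder of rows
   C m, Ea (m-1), D (m-1), C (m-1), ..., C 0, in which every point lies below all points of
   the next row except the one with its own index. A weak coloring of Z/R is monotone, so the
   colour sets along the ladder satisfy col t k \<subseteq> col (t+1) j for j \<noteq> k, and such a
   system has at most 2^n distinct traces (col 0 k, ..., col 3m k). Hence two of the 2^(n+1)
   indices k \<noteq> l share a trace. Identifying ladder points of equal traces from row t on and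
   closing up with R yields an equivalence that descends to a colour-preserving E-partition of
   Z/R (Z is finite and misses Bot, hence discrete). As a coloring separates every nontrivial
   E-partition, this one is the identity, which means (C m k, C m l) \<in> R. *)

section \<open>Counting colour traces\<close>

lemma card_supersets_within:
  assumes "finite M" "V \<subseteq> M"
  shows "card {c. V \<subseteq> c \<and> c \<subseteq> M} = 2 ^ (card M - card V)"
proof -
  have "{c. V \<subseteq> c \<and> c \<subseteq> M} = (\<lambda>d. d \<union> V) ` Pow (M - V)"
    using assms(2) by (auto intro!: image_eqI[where x = "_ - V"])
  moreover have "inj_on (\<lambda>d. d \<union> V) (Pow (M - V))"
    by (auto simp: inj_on_def)
  ultimately have "card {c. V \<subseteq> c \<and> c \<subseteq> M} = card (Pow (M - V))"
    by (simp add: card_image)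
  also have "\<dots> = 2 ^ (card M - card V)"
    using assms by (simp add: card_Pow card_Diff_subset finite_subset)
  finally show ?thesis .
qed

lemma card_heads_tails_le:
  fixes a :: "'k \<Rightarrow> 'a set" and b :: "'k \<Rightarrow> 'b"
  assumes "finite K" "finite M" "V \<subseteq> M" "\<And>k. k \<in> K \<Longrightarrow> V \<subseteq> a k"
    and shared_tail: "\<And>k k'. k \<in> K \<Longrightarrow> k' \<in> K \<Longrightarrow> k \<noteq> k' \<Longrightarrow> b k = b k' \<Longrightarrow> a k \<subseteq> M"
  shows "card ((\<lambda>k. (a k, b k)) ` K) \<le> 2 ^ (card M - card V) * card (b ` K)"
proof -
  define squash where "squash p = (if fst p \<subseteq> M then fst p else V, snd p)" for p :: "'a set \<times> 'b"
  have "inj_on squash ((\<lambda>k. (a k, b k)) ` K)"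
  proof (rule inj_onI)
    fix p p' assume "p \<in> (\<lambda>k. (a k, b k)) ` K" "p' \<in> (\<lambda>k. (a k, b k)) ` K"
      and eq: "squash p = squash p'"
    then obtain k k' where "k \<in> K" "k' \<in> K" "p = (a k, b k)" "p' = (a k', b k')" by blast
    with eq show "p = p'"
      using shared_tail[of k k'] shared_tail[of k' k] by (cases "k = k'") (auto simp: squash_def)
  qed
  then have "card ((\<lambda>k. (a k, b k)) ` K) = card (squash ` (\<lambda>k. (a k, b k)) ` K)"
    by (simp add: card_image)
  also have "\<dots> \<le> card ({c. V \<subseteq> c \<and> c \<subseteq> M} \<times> b ` K)"
    using assms(1-4)
    by (intro card_mono) (force simp: squash_def finite_subset[of _ "Pow M"] split: if_splits)+
  also have "\<dots> = 2 ^ (card M - card V) * card (b ` K)"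
    by (simp add: card_cartesian_product card_supersets_within assms(2,3))
  finally show ?thesis .
qed

definition trace_from :: "(nat \<Rightarrow> 'k \<Rightarrow> 'a) \<Rightarrow> nat \<Rightarrow> nat \<Rightarrow> 'k \<Rightarrow> 'a list" where
  "trace_from col s T k = map (\<lambda>t. col t k) [s..<Suc T]"

lemma trace_from_Cons:
  "s \<le> T \<Longrightarrow> trace_from col s T k = col s k # trace_from col (Suc s) T k"
  by (simp add: trace_from_def upt_conv_Cons del: upt_Suc)

lemma card_image_Cons: "card ((\<lambda>k. f k # g k) ` K) = card ((\<lambda>k. (f k, g k)) ` K)"
proof -
  have "(\<lambda>k. f k # g k) ` K = case_prod Cons ` (\<lambda>k. (f k, g k)) ` K"
    by (simp add: image_image)
  moreover have "inj_on (case_prod Cons) A" for A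
    by (rule inj_onI) auto
  ultimately show ?thesis
    by (metis card_image)
qed

(* With mu the colours shared by the whole next row, cross monotonicity puts col s k inside mu
   as soon as k shares its next colour set with another index, and forces V \<subseteq> mu as soon as
   two indices have colour sets above V. *)
lemma card_traces_Suc_le:
  fixes col :: "nat \<Rightarrow> 'k \<Rightarrow> 'a set"
  assumes "finite I" "finite X" and col_X: "\<And>t k. col t k \<subseteq> X" and "s < T" "V \<subseteq> X"
    and cross_mono: "\<And>k j. k \<in> I \<Longrightarrow> j \<in> I \<Longrightarrow> j \<noteq> k \<Longrightarrow> col s k \<subseteq> col (Suc s) j"
    and IH: "\<And>W. W \<subseteq> X \<Longrightarrow>
      card (trace_from col (Suc s) T ` {k \<in> I. W \<subseteq> col (Suc s) k}) \<le> 2 ^ (card X - card W)"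
  shows "card (trace_from col s T ` {k \<in> I. V \<subseteq> col s k}) \<le> 2 ^ (card X - card V)"
proof -
  let ?K = "{k \<in> I. V \<subseteq> col s k}"
  define mu where "mu = X \<inter> \<Inter> (col (Suc s) ` I)"
  have "finite mu" "mu \<subseteq> X"
    using \<open>finite X\<close> by (auto simp: mu_def)
  show ?thesis
  proof (cases "V \<subseteq> mu")
    case True
    have shared: "col s k \<subseteq> mu"
      if "k \<in> I" "k' \<in> I" "k \<noteq> k'" "col (Suc s) k = col (Suc s) k'" for k k'
      using that cross_mono[OF that(1)] col_X by (auto simp: mu_def)
    have "trace_from col s T ` ?K = (\<lambda>k. col s k # trace_from col (Suc s) T k) ` ?K"
      using \<open>s < T\<close> by (simp add: trace_from_Cons)
    then have "card (trace_from col s T ` ?K)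
        = card ((\<lambda>k. (col s k, trace_from col (Suc s) T k)) ` ?K)"
      by (simp add: card_image_Cons)
    also have "\<dots> \<le> 2 ^ (card mu - card V) * card (trace_from col (Suc s) T ` ?K)"
      using \<open>finite I\<close> \<open>finite mu\<close> True shared \<open>s < T\<close>
      by (intro card_heads_tails_le) (auto simp: trace_from_Cons)
    also have "\<dots> \<le> 2 ^ (card mu - card V) * 2 ^ (card X - card mu)"
    proof -
      have "trace_from col (Suc s) T ` ?K \<subseteq> trace_from col (Suc s) T ` {k \<in> I. mu \<subseteq> col (Suc s) k}"
        by (auto simp: mu_def)
      then have "card (trace_from col (Suc s) T ` ?K)
          \<le> card (trace_from col (Suc s) T ` {k \<in> I. mu \<subseteq> col (Suc s) k})"
        using \<open>finite I\<close> by (intro card_mono) auto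
      then have "card (trace_from col (Suc s) T ` ?K) \<le> 2 ^ (card X - card mu)"
        using IH[OF \<open>mu \<subseteq> X\<close>] by linarith
      then show ?thesis by simp
    qed
    also have "\<dots> = 2 ^ (card X - card V)"
      using True \<open>finite mu\<close> \<open>mu \<subseteq> X\<close> \<open>finite X\<close> card_mono[of mu V] card_mono[of X mu]
      by (simp flip: power_add)
    finally show ?thesis .
  next
    case False
    have "col s k \<inter> col s k' \<subseteq> mu" if "k \<in> I" "k' \<in> I" "k \<noteq> k'" for k k'
      using that cross_mono[OF that(1)] cross_mono[OF that(2) that(1)] col_X
      by (auto simp: mu_def) (metis subsetD)
    with False have "card ?K \<le> 1"
      by (auto simp: card_le_Suc0_iff_eq \<open>finite I\<close>) blast
    then have "card (trace_from col s T ` ?K) \<le> 1"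
      using card_image_le[of ?K "trace_from col s T"] \<open>finite I\<close> by simp
    then show ?thesis
      using one_le_power[of "2::nat"] by (meson le_trans one_le_numeral)
  qed
qed

lemma card_traces_le:
  fixes col :: "nat \<Rightarrow> 'k \<Rightarrow> 'a set"
  assumes "finite I" "finite X" and col_X: "\<And>t k. col t k \<subseteq> X"
    and cross_mono: "\<And>t k j. t < T \<Longrightarrow> k \<in> I \<Longrightarrow> j \<in> I \<Longrightarrow> j \<noteq> k \<Longrightarrow> col t k \<subseteq> col (Suc t) j"
  shows "s \<le> T \<Longrightarrow> V \<subseteq> X \<Longrightarrow>
    card (trace_from col s T ` {k \<in> I. V \<subseteq> col s k}) \<le> 2 ^ (card X - card V)"
proof (induction s arbitrary: V rule: inc_induct)
  case base
  have "trace_from col T T ` {k \<in> I. V \<subseteq> col T k} = (\<lambda>c. [c]) ` col T ` {k \<in> I. V \<subseteq> col T k}"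
    by (simp add: trace_from_def image_image)
  moreover have "inj_on (\<lambda>c. [c]) A" for A :: "'a set set"
    by (simp add: inj_on_def)
  ultimately have "card (trace_from col T T ` {k \<in> I. V \<subseteq> col T k})
      = card (col T ` {k \<in> I. V \<subseteq> col T k})"
    by (simp add: card_image)
  also have "\<dots> \<le> card {c. V \<subseteq> c \<and> c \<subseteq> X}"
    using col_X \<open>finite X\<close> by (intro card_mono) (auto intro: finite_subset[of _ "Pow X"])
  also have "\<dots> = 2 ^ (card X - card V)"
    using base \<open>finite X\<close> by (simp add: card_supersets_within)
  finally show ?case .
next
  case (step s)
  show ?case
    using card_traces_Suc_le[OF assms(1-3) step.hyps(2) step.prems cross_mono[OF step.hyps(2)]
        step.IH] .
qed

lemma obtain_same_trace:
  fixes col :: "nat \<Rightarrow> 'k \<Rightarrow> 'a set"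
  assumes "finite I" "finite X" "2 ^ card X < card I" "\<And>t k. col t k \<subseteq> X"
    and "\<And>t k j. t < T \<Longrightarrow> k \<in> I \<Longrightarrow> j \<in> I \<Longrightarrow> j \<noteq> k \<Longrightarrow> col t k \<subseteq> col (Suc t) j"
  obtains k l where "k \<in> I" "l \<in> I" "k \<noteq> l" "trace_from col 0 T k = trace_from col 0 T l"
proof -
  have "card (trace_from col 0 T ` I) \<le> 2 ^ card X"
    using card_traces_le[of I X col T 0 "{}"] assms by simp
  then have "card (trace_from col 0 T ` I) < card I"
    using assms(3) by linarith
  then have "\<not> inj_on (trace_from col 0 T) I"
    using card_image by force
  then show thesis
    unfolding inj_on_def using that by blast
qed

section \<open>Enlarging an E-partition of a discrete space\<close>

(* Condition (a) of an E-partition for the single pair (x, y). *)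
definition lifts :: "'a set \<Rightarrow> ('a \<Rightarrow> 'a \<Rightarrow> bool) \<Rightarrow> ('a \<times> 'a) set \<Rightarrow> 'a \<Rightarrow> 'a \<Rightarrow> bool" where
  "lifts S le Q x y \<longleftrightarrow> (\<forall>z\<in>S. le x z \<longrightarrow> (\<exists>w\<in>S. le y w \<and> (z, w) \<in> Q))"

lemma E_partition_lifts: "E_partition S Op le R \<Longrightarrow> (x, y) \<in> R \<Longrightarrow> lifts S le R x y"
  by (auto simp: E_partition_def lifts_def)

lemma lifts_mono: "Q \<subseteq> Q' \<Longrightarrow> lifts S le Q x y \<Longrightarrow> lifts S le Q' x y"
  by (fastforce simp: lifts_def)

lemma lifts_trans: "trans Q \<Longrightarrow> lifts S le Q x y \<Longrightarrow> lifts S le Q y y' \<Longrightarrow> lifts S le Q x y'"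
  unfolding lifts_def by (blast dest: transD)

lemma lifts_trancl:
  assumes "\<And>x y. (x, y) \<in> P \<Longrightarrow> lifts S le (P\<^sup>+) x y" and "(x, y) \<in> P\<^sup>+"
  shows "lifts S le (P\<^sup>+) x y"
  using assms(2)
proof induction
  case (step y z)
  show ?case
    using lifts_trans[OF trans_trancl step.IH assms(1)[OF step.hyps(2)]] .
qed (rule assms(1))

definition quot_rel :: "('a \<times> 'a) set \<Rightarrow> ('a \<times> 'a) set \<Rightarrow> ('a set \<times> 'a set) set" where
  "quot_rel R Q = (\<lambda>(x, y). (R `` {x}, R `` {y})) ` Q"

lemma quot_rel_iff:
  assumes "equiv Z R" "equiv Z Q" "R \<subseteq> Q" "x \<in> Z" "y \<in> Z"
  shows "(R `` {x}, R `` {y}) \<in> quot_rel R Q \<longleftrightarrow> (x, y) \<in> Q"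
proof
  assume "(R `` {x}, R `` {y}) \<in> quot_rel R Q"
  then obtain x' y' where "(x', y') \<in> Q"
    and x': "R `` {x} = R `` {x'}" and y': "R `` {y} = R `` {y'}"
    by (auto simp: quot_rel_def)
  moreover have "x' \<in> Z" "y' \<in> Z"
    using \<open>(x', y') \<in> Q\<close> assms(2) unfolding equiv_def refl_on_def by blast+
  then have "(x, x') \<in> Q" "(y', y) \<in> Q"
    using eq_equiv_class_iff[OF assms(1) assms(4) \<open>x' \<in> Z\<close>] x'
      eq_equiv_class_iff[OF assms(1) \<open>y' \<in> Z\<close> assms(5)] y' assms(3) by auto
  ultimately show "(x, y) \<in> Q"
    using assms(2) by (meson equivE transD)
qed (auto simp: quot_rel_def)

lemma equiv_quot_rel:
  assumes "equiv Z R" "equiv Z Q" "R \<subseteq> Q"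
  shows "equiv (Z // R) (quot_rel R Q)"
proof (rule equivI)
  have Q: "Q \<subseteq> Z \<times> Z" "sym Q" "trans Q" "\<And>x. x \<in> Z \<Longrightarrow> (x, x) \<in> Q"
    using assms(2) by (auto simp: equiv_def refl_on_def)
  show "quot_rel R Q \<subseteq> Z // R \<times> Z // R"
    using Q(1) by (auto simp: quot_rel_def quotientI)
  show "refl_on (Z // R) (quot_rel R Q)"
    using Q(1,4) by (auto simp: refl_on_def quot_rel_def quotient_def)
  show "sym (quot_rel R Q)"
    using Q(2) by (auto simp: sym_def quot_rel_def)
  show "trans (quot_rel R Q)"
  proof (rule transI)
    fix X Y W assume XY: "(X, Y) \<in> quot_rel R Q" and YW: "(Y, W) \<in> quot_rel R Q"
    then obtain x y y' w where xy: "(x, y) \<in> Q" and yw: "(y', w) \<in> Q"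
      and "X = R `` {x}" "W = R `` {w}" and y: "R `` {y} = R `` {y'}"
      by (auto simp: quot_rel_def)
    moreover have "(y, y') \<in> R"
      using y xy yw Q(1) eq_equiv_class_iff[OF assms(1)] by blast
    then have "(x, w) \<in> Q"
      using xy yw Q(3) assms(3) by (meson subsetD transD)
    ultimately show "(X, W) \<in> quot_rel R Q"
      by (auto simp: quot_rel_def)
  qed
qed

lemma clopen_in_quot_opens_discrete:
  assumes "Pow Z \<subseteq> Op" "equiv Z R" "U \<subseteq> Z // R"
  shows "clopen_in (Z // R) (quot_opens Z Op R) U"
proof -
  have "\<Union> (Z // R) = Z"
    using assms(2) by (rule Union_quotient)
  then have "\<Union> U \<subseteq> Z" "\<Union> (Z // R - U) \<subseteq> Z"
    using Union_mono[OF assms(3)] Union_mono[OF Diff_subset] by auto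
  then have "\<Union> U \<in> Op" "\<Union> (Z // R - U) \<in> Op"
    using assms(1) by auto
  then show ?thesis
    using assms(3) by (auto simp: clopen_in_def quot_opens_def)
qed

lemma lifts_quot_rel:
  assumes eqR: "equiv Z R" and Q: "equiv Z Q" "R \<subseteq> Q"
    and lifts: "\<And>x y. (x, y) \<in> Q \<Longrightarrow> lifts Z le Q x y"
    and XY: "(X, Y) \<in> quot_rel R Q"
  shows "lifts (Z // R) (quot_le le) (quot_rel R Q) X Y"
  unfolding lifts_def
proof (intro ballI impI)
  fix W assume "W \<in> Z // R" "quot_le le X W"
  obtain x y where "(x, y) \<in> Q" "X = R `` {x}" "Y = R `` {y}"
    using XY unfolding quot_rel_def by (auto simp: image_iff)
  obtain p z where "p \<in> X" "z \<in> W" "le p z"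
    using \<open>quot_le le X W\<close> unfolding quot_le_def by blast
  have "(x, p) \<in> Q"
    using \<open>p \<in> X\<close> \<open>X = R `` {x}\<close> Q(2) by blast
  then have "(p, y) \<in> Q"
    using \<open>(x, y) \<in> Q\<close> Q(1) by (meson equivE symD transD)
  have "y \<in> Z"
    using \<open>(x, y) \<in> Q\<close> Q(1) by (auto simp: equiv_def refl_on_def)
  obtain z0 where "W = R `` {z0}"
    using \<open>W \<in> Z // R\<close> by (rule quotientE)
  then have "(z0, z) \<in> R"
    using \<open>z \<in> W\<close> by simp
  then have "z \<in> Z" and W: "W = R `` {z}"
    using \<open>W = R `` {z0}\<close> equiv_class_eq[OF eqR] eqR by (auto simp: equiv_def refl_on_def)
  obtain w where "w \<in> Z" "le y w" "(z, w) \<in> Q"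
    using lifts[OF \<open>(p, y) \<in> Q\<close>] \<open>le p z\<close> \<open>z \<in> Z\<close> unfolding lifts_def by blast
  have "y \<in> R `` {y}" "w \<in> R `` {w}"
    using eqR \<open>y \<in> Z\<close> \<open>w \<in> Z\<close> by (auto simp: equiv_def refl_on_def)
  then have "quot_le le Y (R `` {w})"
    using \<open>le y w\<close> \<open>Y = R `` {y}\<close> by (auto simp: quot_le_def)
  moreover have "(W, R `` {w}) \<in> quot_rel R Q"
    unfolding W quot_rel_def using \<open>(z, w) \<in> Q\<close> by (rule rev_image_eqI) simp
  moreover have "R `` {w} \<in> Z // R"
    using \<open>w \<in> Z\<close> by (rule quotientI)
  ultimately show "\<exists>V\<in>Z // R. quot_le le Y V \<and> (W, V) \<in> quot_rel R Q"
    by blast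
qed

lemma clopen_class_separates:
  assumes "Pow Z \<subseteq> Op" "equiv Z R" "equiv (Z // R) S" "X \<in> Z // R" "(X, Y) \<notin> S"
  shows "\<exists>U. clopen_in (Z // R) (quot_opens Z Op R) U \<and> (\<forall>u\<in>U. \<forall>v. (u, v) \<in> S \<longrightarrow> v \<in> U)
    \<and> X \<in> U \<and> Y \<notin> U"
proof (intro exI conjI)
  show "clopen_in (Z // R) (quot_opens Z Op R) (S `` {X})"
    using assms(3)
    by (intro clopen_in_quot_opens_discrete[OF assms(1,2)]) (auto simp: equiv_def refl_on_def)
  show "\<forall>u\<in>S `` {X}. \<forall>v. (u, v) \<in> S \<longrightarrow> v \<in> S `` {X}"
    using assms(3) by (auto simp: equiv_def dest: transD)
  show "X \<in> S `` {X}"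
    using assms(3,4) by (auto simp: equiv_def refl_on_def)
  show "Y \<notin> S `` {X}"
    using assms(5) by simp
qed

lemma E_partition_quot_rel:
  assumes R: "E_partition Z Op le R" and discrete: "Pow Z \<subseteq> Op"
    and Q: "equiv Z Q" "R \<subseteq> Q" and lifts: "\<And>x y. (x, y) \<in> Q \<Longrightarrow> lifts Z le Q x y"
  shows "E_partition (Z // R) (quot_opens Z Op R) (quot_le le) (quot_rel R Q)"
proof -
  have eqR: "equiv Z R"
    using R by (simp add: E_partition_def)
  have eq: "equiv (Z // R) (quot_rel R Q)"
    using equiv_quot_rel[OF eqR Q] .
  show ?thesis
    unfolding E_partition_def
    using eq lifts_quot_rel[OF eqR Q lifts] clopen_class_separates[OF discrete eqR eq]
    by (auto simp: lifts_def)
qed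

lemma equiv_trancl_Un:
  assumes "equiv Z R" "G \<subseteq> Z \<times> Z" "sym G"
  shows "equiv Z ((R \<union> G)\<^sup>+)"
proof (rule equivI)
  have "R \<subseteq> Z \<times> Z" "refl_on Z R" "sym R"
    using assms(1) by (auto simp: equiv_def refl_on_def)
  then show "(R \<union> G)\<^sup>+ \<subseteq> Z \<times> Z" "refl_on Z ((R \<union> G)\<^sup>+)" "sym ((R \<union> G)\<^sup>+)"
    using assms(2,3) by (auto simp: refl_on_def trancl_subset_Sigma sym_Un sym_trancl)
qed simp

lemma same_color_trancl_Un:
  assumes "equiv Z R" and G_color: "\<And>x y. (x, y) \<in> G \<Longrightarrow> same_color n (f (R `` {x})) (f (R `` {y}))"
    and "(x, y) \<in> (R \<union> G)\<^sup>+"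
  shows "same_color n (f (R `` {x})) (f (R `` {y}))"
  using assms(3)
proof induction
  case (base y)
  then show ?case
    using G_color equiv_class_eq[OF assms(1)] by (auto simp: same_color_def)
next
  case (step y z)
  then show ?case
    using G_color equiv_class_eq[OF assms(1)] by (auto simp: same_color_def)
qed

(* (R \<union> G)\<^sup>+ descends to a colour-preserving E-partition of Z // R, which the coloring
   forces to be the identity. *)
lemma coloring_forces_refinement:
  assumes R: "E_partition Z Op le R" and discrete: "Pow Z \<subseteq> Op"
    and f: "coloring n (Z // R) (quot_opens Z Op R) (quot_le le) f"
    and G: "G \<subseteq> Z \<times> Z" "sym G"
    and G_lifts: "\<And>x y. (x, y) \<in> G \<Longrightarrow> lifts Z le ((R \<union> G)\<^sup>+) x y"
    and G_color: "\<And>x y. (x, y) \<in> G \<Longrightarrow> same_color n (f (R `` {x})) (f (R `` {y}))"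
  shows "G \<subseteq> R"
proof -
  define Q where "Q = (R \<union> G)\<^sup>+"
  have eqR: "equiv Z R"
    using R by (simp add: E_partition_def)
  have eqQ: "equiv Z Q"
    unfolding Q_def using eqR G by (rule equiv_trancl_Un)
  have "R \<subseteq> Q"
    by (auto simp: Q_def)
  have "lifts Z le Q x y" if "(x, y) \<in> Q" for x y
    using that unfolding Q_def
  proof (rule lifts_trancl[rotated])
    fix x y assume "(x, y) \<in> R \<union> G"
    with R G_lifts show "lifts Z le ((R \<union> G)\<^sup>+) x y"
      by (auto intro: lifts_mono[of R] E_partition_lifts)
  qed
  then have E: "E_partition (Z // R) (quot_opens Z Op R) (quot_le le) (quot_rel R Q)"
    using E_partition_quot_rel[OF R discrete eqQ \<open>R \<subseteq> Q\<close>] by blast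
  have color: "same_color n (f (R `` {x})) (f (R `` {y}))" if "(x, y) \<in> Q" for x y
    using same_color_trancl_Un[where G = G and f = f, OF eqR G_color] that unfolding Q_def by blast
  have "quot_rel R Q = Id_on (Z // R)"
  proof (rule ccontr)
    assume "quot_rel R Q \<noteq> Id_on (Z // R)"
    then obtain X Y where "(X, Y) \<in> quot_rel R Q" "\<not> same_color n (f X) (f Y)"
      using f E unfolding coloring_def by blast
    then show False
      using color unfolding quot_rel_def by auto
  qed
  show "G \<subseteq> R"
  proof clarify
    fix x y assume "(x, y) \<in> G"
    then have "x \<in> Z" "y \<in> Z" "(x, y) \<in> Q"
      using G(1) by (auto simp: Q_def)
    then have "R `` {x} = R `` {y}"
      using quot_rel_iff[OF eqR eqQ \<open>R \<subseteq> Q\<close>] \<open>quot_rel R Q = Id_on (Z // R)\<close> by auto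
    then show "(x, y) \<in> R"
      using eq_equiv_class_iff[OF eqR \<open>x \<in> Z\<close> \<open>y \<in> Z\<close>] by simp
  qed
qed

lemma weak_coloring_quot_mono:
  assumes "weak_coloring n (Z // R) Op (quot_le le) f" "equiv Z R" "x \<in> Z" "y \<in> Z" "le x y"
  shows "{i. i < n \<and> f (R `` {x}) i} \<subseteq> {i. i < n \<and> f (R `` {y}) i}"
proof -
  have "x \<in> R `` {x}" "y \<in> R `` {y}"
    using assms(2-4) by (auto simp: equiv_def refl_on_def)
  then have "quot_le le (R `` {x}) (R `` {y})"
    using assms(5) by (auto simp: quot_le_def)
  then show ?thesis
    using assms(1,3,4) quotientI[of _ Z R] by (auto simp: weak_coloring_def)
qed

section \<open>The ladder below the points C m k\<close>

lemma one_le_NN: "1 \<le> NN n"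
  unfolding NN_def by (induction n) auto

lemma Bot_notin_Un_set: "Bot \<notin> Un_set n"
  by (auto simp: Un_set_def)

lemma abom_le_Un_set_iff:
  assumes "x \<in> Un_set n"
  shows "abom_le n s x y \<longleftrightarrow> (x, y) \<in> {(u, v). prec n s u v}\<^sup>*"
proof
  assume "(x, y) \<in> {(u, v). prec n s u v}\<^sup>*"
  then have "y \<in> Un_set n"
    using assms by induction (auto simp: prec_def)
  with assms \<open>(x, y) \<in> _\<close> show "abom_le n s x y"
    by (simp add: abom_le_def abom_carrier_def)
qed (use assms Bot_notin_Un_set in \<open>auto simp: abom_le_def\<close>)

lemma abom_le_if_prec: "prec n s x y \<Longrightarrow> abom_le n s x y"
  using abom_le_Un_set_iff[of x n s y] by (auto simp: prec_def)

lemma Bot_notin_finite_upset: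
  assumes "finite Z" "E_subspace (abom_carrier n) (abom_opens n) (abom_le n s) Z"
  shows "Bot \<notin> Z"
proof
  assume "Bot \<in> Z"
  then have "range A \<subseteq> Z"
    using assms(2) by (auto simp: E_subspace_def abom_le_def abom_carrier_def Un_set_def)
  moreover have "infinite (range A)"
    using finite_imageD[of A UNIV] by (auto simp: inj_def)
  ultimately show False
    using assms(1) finite_subset by blast
qed

lemma Pow_subset_sub_opens:
  assumes "Z \<subseteq> abom_carrier n" "Bot \<notin> Z"
  shows "Pow Z \<subseteq> sub_opens (abom_opens n) Z"
proof
  fix V assume "V \<in> Pow Z"
  then have "V \<in> abom_opens n" "V = V \<inter> Z"
    using assms by (auto simp: abom_opens_def)
  then show "V \<in> sub_opens (abom_opens n) Z"
    unfolding sub_opens_def by blast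
qed

(* Rows 3q, 3q+1, 3q+2 consist of C (m-q), Ea (m-q-1), D (m-q-1); by clauses (3)-(5) of prec
   each point of a row lies below every point of the next row with a different index. *)
definition ladder :: "nat \<Rightarrow> nat \<Rightarrow> nat \<Rightarrow> elt" where
  "ladder m t k = (if t mod 3 = 0 then C (m - t div 3) k
                   else if t mod 3 = 1 then Ea (m - t div 3 - 1) k else D (m - t div 3 - 1) k)"

lemma ladder_0 [simp]: "ladder m 0 k = C m k"
  by (simp add: ladder_def)

lemma ladder_in_Un_set: "k \<le> NN n \<Longrightarrow> ladder m t k \<in> Un_set n"
  unfolding ladder_def Un_set_def by auto

lemma ladder_cases:
  obtains q where "t = 3 * q"
      "\<And>l. ladder m t l = C (m - q) l" "\<And>l. ladder m (Suc t) l = Ea (m - q - 1) l"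
  | q where "t = 3 * q + 1"
      "\<And>l. ladder m t l = Ea (m - q - 1) l" "\<And>l. ladder m (Suc t) l = D (m - q - 1) l"
  | q where "t = 3 * q + 2"
      "\<And>l. ladder m t l = D (m - q - 1) l" "\<And>l. ladder m (Suc t) l = C (m - q - 1) l"
proof -
  consider "t mod 3 = 0" | "t mod 3 = 1" | "t mod 3 = 2"
    by linarith
  then show thesis
  proof cases
    case 1
    then have "Suc t mod 3 = 1" "Suc t div 3 = t div 3" "t = 3 * (t div 3)"
      by presburger+
    with 1 show thesis
      using that(1)[of "t div 3"] by (auto simp: ladder_def)
  next
    case 2
    then have "Suc t mod 3 = 2" "Suc t div 3 = t div 3" "t = 3 * (t div 3) + 1"
      by presburger+
    with 2 show thesis
      using that(2)[of "t div 3"] by (auto simp: ladder_def)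
  next
    case 3
    then have "Suc t mod 3 = 0" "Suc t div 3 = Suc (t div 3)" "t = 3 * (t div 3) + 2"
      by presburger+
    with 3 show thesis
      using that(3)[of "t div 3"] by (auto simp: ladder_def)
  qed
qed

lemma prec_ladder:
  assumes "t < 3 * m" "k \<le> NN n" "j \<le> NN n" "j \<noteq> k"
  shows "prec n s (ladder m t k) (ladder m (Suc t) j)"
  using assms ladder_in_Un_set[of k n m t] ladder_in_Un_set[of j n m "Suc t"]
  by (cases t m rule: ladder_cases) (auto simp: prec_def)

lemma prec_ladder_cases:
  assumes "t \<le> 3 * m" "l \<le> NN n" "prec n s (ladder m t k) z"
  shows "(t < 3 * m \<and> z = ladder m (Suc t) l) \<or> prec n s (ladder m t l) z"
  using assms ladder_in_Un_set[of l n m t]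
  by (cases t m rule: ladder_cases) (auto simp: prec_def, presburger+)

lemma ladder_in_upset:
  assumes Z: "E_subspace (abom_carrier n) (abom_opens n) (abom_le n s) Z"
    and C: "\<forall>k \<le> NN n. C m k \<in> Z"
  shows "t \<le> 3 * m \<Longrightarrow> k \<le> NN n \<Longrightarrow> ladder m t k \<in> Z"
proof (induction t arbitrary: k)
  case 0
  then show ?case using C by simp
next
  case (Suc t)
  define j where "j = (if k = 0 then 1 else 0 :: nat)"
  have "j \<le> NN n" "j \<noteq> k"
    using one_le_NN[of n] by (auto simp: j_def)
  with Suc have "ladder m t j \<in> Z" "abom_le n s (ladder m t j) (ladder m (Suc t) k)"
    by (auto intro!: abom_le_if_prec prec_ladder)
  then show ?case
    using Z by (auto simp: E_subspace_def abom_le_def)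
qed

(* The only step up from ladder m t k that need not lie above ladder m t l leads to
   ladder m (Suc t) l; it is matched by ladder m (Suc t) k, which lies above ladder m t l. *)
lemma lifts_ladder_step:
  assumes ladder_Z: "\<And>t k. t \<le> 3 * m \<Longrightarrow> k \<le> NN n \<Longrightarrow> ladder m t k \<in> Z"
    and Q: "Id_on Z \<subseteq> Q" "(ladder m t k, ladder m t l) \<in> Q"
    and t_le: "t \<le> 3 * m" and k_le: "k \<le> NN n" and l_le: "l \<le> NN n"
    and IH: "t < 3 * m \<Longrightarrow> lifts Z (abom_le n s) Q (ladder m (Suc t) l) (ladder m (Suc t) k)"
  shows "lifts Z (abom_le n s) Q (ladder m t k) (ladder m t l)"
  unfolding lifts_def
proof (intro ballI impI)
  let ?P = "{(u, v). prec n s u v}"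
  have le_iff: "abom_le n s (ladder m t' k') z \<longleftrightarrow> (ladder m t' k', z) \<in> ?P\<^sup>*"
    if "k' \<le> NN n" for t' k' z
    using abom_le_Un_set_iff[OF ladder_in_Un_set[OF that]] .
  fix z assume "z \<in> Z" "abom_le n s (ladder m t k) z"
  then have "(ladder m t k, z) \<in> ?P\<^sup>*"
    using le_iff k_le by blast
  then show "\<exists>w\<in>Z. abom_le n s (ladder m t l) w \<and> (z, w) \<in> Q"
  proof (cases rule: converse_rtranclE)
    case base
    then show ?thesis
      using Q(2) ladder_Z t_le l_le le_iff by blast
  next
    case (step y)
    show ?thesis
    proof (cases "t < 3 * m \<and> y = ladder m (Suc t) l \<and> k \<noteq> l")
      case True
      then have "abom_le n s (ladder m (Suc t) l) z"
        using step le_iff l_le by blast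
      then obtain w where "w \<in> Z" "abom_le n s (ladder m (Suc t) k) w" "(z, w) \<in> Q"
        using IH True \<open>z \<in> Z\<close> unfolding lifts_def by blast
      moreover have "prec n s (ladder m t l) (ladder m (Suc t) k)"
        using prec_ladder True k_le l_le by blast
      ultimately show ?thesis
        using le_iff k_le l_le by (blast intro: converse_rtrancl_into_rtrancl)
    next
      case False
      then have "(ladder m t l, z) \<in> ?P\<^sup>*"
        using prec_ladder_cases[OF t_le l_le] step \<open>(ladder m t k, z) \<in> ?P\<^sup>*\<close>
        by (auto intro: converse_rtrancl_into_rtrancl)
      then show ?thesis
        using \<open>z \<in> Z\<close> Q(1) le_iff l_le by blast
    qed
  qed
qed

lemma ladder_rows_lift:
  fixes sig :: "nat \<Rightarrow> nat \<Rightarrow> 'a"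
  assumes ladder_Z: "\<And>t k. t \<le> 3 * m \<Longrightarrow> k \<le> NN n \<Longrightarrow> ladder m t k \<in> Z"
    and sig_Suc: "\<And>t k l. t < 3 * m \<Longrightarrow> sig t k = sig t l \<Longrightarrow> sig (Suc t) k = sig (Suc t) l"
    and Q: "Id_on Z \<subseteq> Q"
      "\<And>t k l. t \<le> 3 * m \<Longrightarrow> k \<le> NN n \<Longrightarrow> l \<le> NN n \<Longrightarrow> sig t k = sig t l \<Longrightarrow>
        (ladder m t k, ladder m t l) \<in> Q"
  shows "t \<le> 3 * m \<Longrightarrow> k \<le> NN n \<Longrightarrow> l \<le> NN n \<Longrightarrow> sig t k = sig t l \<Longrightarrow>
    lifts Z (abom_le n s) Q (ladder m t k) (ladder m t l)"
proof (induction t arbitrary: k l rule: inc_induct)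
  case base
  show ?case
    using base by - (rule lifts_ladder_step[OF ladder_Z Q(1) Q(2)], simp_all)
next
  case (step t)
  have "sig (Suc t) l = sig (Suc t) k"
    using sig_Suc[OF step.hyps(2) step.prems(3)[symmetric]] .
  then show ?case
    using step by - (rule lifts_ladder_step[OF ladder_Z Q(1) Q(2)], simp_all)
qed

lemma ladder_rows_related:
  fixes sig :: "nat \<Rightarrow> nat \<Rightarrow> 'a"
  assumes "finite Z" and Z: "E_subspace (abom_carrier n) (abom_opens n) (abom_le n s) Z"
    and R: "E_partition Z (sub_opens (abom_opens n) Z) (abom_le n s) R"
    and f: "coloring n (Z // R) (quot_opens Z (sub_opens (abom_opens n) Z) R)
      (quot_le (abom_le n s)) f"
    and C: "\<forall>k \<le> NN n. C m k \<in> Z"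
    and sig_Suc: "\<And>t k l. t < 3 * m \<Longrightarrow> sig t k = sig t l \<Longrightarrow> sig (Suc t) k = sig (Suc t) l"
    and sig_color: "\<And>t k l. t \<le> 3 * m \<Longrightarrow> sig t k = sig t l \<Longrightarrow>
      same_color n (f (R `` {ladder m t k})) (f (R `` {ladder m t l}))"
    and "k \<le> NN n" "l \<le> NN n" "sig 0 k = sig 0 l"
  shows "(C m k, C m l) \<in> R"
proof -
  define G where "G = {(ladder m t k, ladder m t l) | t k l.
    t \<le> 3 * m \<and> k \<le> NN n \<and> l \<le> NN n \<and> sig t k = sig t l}"
  have ladder_Z: "ladder m t k \<in> Z" if "t \<le> 3 * m" "k \<le> NN n" for t k
    using ladder_in_upset[OF Z C that] .
  have "Pow Z \<subseteq> sub_opens (abom_opens n) Z"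
    using Z Bot_notin_finite_upset[OF \<open>finite Z\<close> Z]
    by (intro Pow_subset_sub_opens) (simp_all add: E_subspace_def)
  moreover have "G \<subseteq> Z \<times> Z" "sym G"
    using ladder_Z by (auto simp: G_def sym_def) metis
  moreover have "lifts Z (abom_le n s) ((R \<union> G)\<^sup>+) x y" if "(x, y) \<in> G" for x y
  proof -
    have "Id_on Z \<subseteq> (R \<union> G)\<^sup>+"
      using R by (auto simp: E_partition_def equiv_def refl_on_def)
    moreover have "(ladder m t k, ladder m t l) \<in> (R \<union> G)\<^sup>+"
      if "t \<le> 3 * m" "k \<le> NN n" "l \<le> NN n" "sig t k = sig t l" for t k l
      using that unfolding G_def by blast
    ultimately show ?thesis
      using \<open>(x, y) \<in> G\<close> ladder_rows_lift[where sig = sig and Q = "(R \<union> G)\<^sup>+", OF ladder_Z sig_Suc]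
      unfolding G_def by blast
  qed
  moreover have "same_color n (f (R `` {x})) (f (R `` {y}))" if "(x, y) \<in> G" for x y
  proof -
    obtain t k l where "x = ladder m t k" "y = ladder m t l" "t \<le> 3 * m" "sig t k = sig t l"
      using \<open>(x, y) \<in> G\<close> unfolding G_def by blast
    then show ?thesis
      using sig_color by blast
  qed
  ultimately have "G \<subseteq> R"
    by (rule coloring_forces_refinement[OF R _ f])
  moreover have "(ladder m 0 k, ladder m 0 l) \<in> G"
    using assms(8-10) unfolding G_def by blast
  ultimately show ?thesis
    by auto
qed

lemma ladder_colors_cross_mono:
  assumes Z: "E_subspace (abom_carrier n) (abom_opens n) (abom_le n s) Z"
    and "equiv Z R" and f: "weak_coloring n (Z // R) Op (quot_le (abom_le n s)) f"
    and C: "\<forall>k \<le> NN n. C m k \<in> Z"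
    and "t < 3 * m" "k \<le> NN n" "j \<le> NN n" "j \<noteq> k"
  shows "{i. i < n \<and> f (R `` {ladder m t k}) i} \<subseteq> {i. i < n \<and> f (R `` {ladder m (Suc t) j}) i}"
proof (rule weak_coloring_quot_mono[OF f \<open>equiv Z R\<close>])
  show "ladder m t k \<in> Z" "ladder m (Suc t) j \<in> Z"
    using ladder_in_upset[OF Z C] assms(5-7) by auto
  show "abom_le n s (ladder m t k) (ladder m (Suc t) j)"
    using assms(5-8) by (auto intro!: abom_le_if_prec prec_ladder)
qed

theorem mainTheorem9:
  fixes n :: nat and s :: "nat \<Rightarrow> nat \<times> nat \<times> nat" and Z :: "elt set"
    and R :: "(elt \<times> elt) set"
  assumes "n \<ge> 2"
    and "enumeration n s"
    and "finite Z"
    and "E_subspace (abom_carrier n) (abom_opens n) (abom_le n s) Z"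
    and "E_partition Z (sub_opens (abom_opens n) Z) (abom_le n s) R"
    and "colorable n (Z // R) (quot_opens Z (sub_opens (abom_opens n) Z) R) (quot_le (abom_le n s))"
  shows "\<forall>m. (\<forall>k \<le> NN n. C m k \<in> Z) \<longrightarrow> (\<exists>i j. i < j \<and> j \<le> NN n \<and> (C m i, C m j) \<in> R)"
proof (intro allI impI)
  fix m assume C: "\<forall>k \<le> NN n. C m k \<in> Z"
  obtain f where f: "coloring n (Z // R) (quot_opens Z (sub_opens (abom_opens n) Z) R)
      (quot_le (abom_le n s)) f"
    using assms(6) by (auto simp: colorable_def)
  have eqR: "equiv Z R"
    using assms(5) by (simp add: E_partition_def)
  have wc: "weak_coloring n (Z // R) (quot_opens Z (sub_opens (abom_opens n) Z) R)
      (quot_le (abom_le n s)) f"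
    using f by (simp add: coloring_def)
  let ?col = "\<lambda>t k. {i. i < n \<and> f (R `` {ladder m t k}) i}"
  have "2 ^ card {..<n} < card {..NN n}"
    by (simp add: NN_def)
  then obtain k l where "k \<in> {..NN n}" "l \<in> {..NN n}" "k \<noteq> l"
    and "trace_from ?col 0 (3 * m) k = trace_from ?col 0 (3 * m) l"
    using obtain_same_trace[of "{..NN n}" "{..<n}" ?col "3 * m"]
      ladder_colors_cross_mono[OF assms(4) eqR wc C] by blast
  have "(C m k, C m l) \<in> R"
    by (rule ladder_rows_related[OF assms(3-5) f C, where sig = "\<lambda>t. trace_from ?col t (3 * m)"])
      (use \<open>k \<in> {..NN n}\<close> \<open>l \<in> {..NN n}\<close> \<open>trace_from ?col 0 (3 * m) k = _\<close> in
        \<open>auto simp: trace_from_Cons same_color_def set_eq_iff\<close>)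
  moreover from this have "(C m l, C m k) \<in> R"
    using eqR by (auto simp: equiv_def dest: symD)
  ultimately show "\<exists>i j. i < j \<and> j \<le> NN n \<and> (C m i, C m j) \<in> R"
    using \<open>k \<noteq> l\<close> \<open>k \<in> {..NN n}\<close> \<open>l \<in> {..NN n}\<close> by (metis atMost_iff linorder_neqE_nat)
qed

end
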